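(* Let $(\Omega,\Sigma,\Pr)$ be a probability space and let $A_i\in\Sigma$ for $i\in\mathbb{N}$. For $k\in\mathbb{N}$ let $S_k:=\sum_{1\le i_1<\cdots<i_k}\Pr(A_{i_1}\cap\cdots\cap A_{i_k})$, and assume $S_l\in[0,\infty)$ for all $l\in\mathbb{N}$. Suppose that for some integer $m>1$ the identity $$\Pr\Big(\bigcup_{1\le i_1<\cdots<i_k}(A_{i_1}\cap\cdots\cap A_{i_k})\Big)=\sum_{j\in\mathbb{Z}_+}(-1)^j\binom{j+k-1}{k-1}S_{j+k}$$ holds for $k=m$ (with the series convergent). Then this identity holds for each $k=1,\ldots,m-1$.
   Context: $\mathbb{N}$ denotes the positive integers and $\mathbb{Z}_+$ the nonnegative integers. *)

theory Defs
  imports "HOL-Probability.Probability"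
begin

definition ksubsets :: "nat \<Rightarrow> nat set set" where
  "ksubsets k = {I. I \<subseteq> {1..} \<and> finite I \<and> card I = k}"

definition Ssum :: "'a measure \<Rightarrow> (nat \<Rightarrow> 'a set) \<Rightarrow> nat \<Rightarrow> real" where
  "Ssum M A k = infsum (\<lambda>I. measure M (\<Inter>i\<in>I. A i)) (ksubsets k)"

definition atleast_event :: "(nat \<Rightarrow> 'a set) \<Rightarrow> nat \<Rightarrow> 'a set" where
  "atleast_event A k = (\<Union>I\<in>ksubsets k. \<Inter>i\<in>I. A i)"

end

theory Submission
  imports Defs
begin

text \<open>Let \<open>N\<close> be the number of events \<open>A i\<close> that occur. Since \<open>S\<^sub>1\<close> is finite, \<open>N\<close> is
  finite almost surely, and \<open>S\<^sub>l\<close> is the expectation of \<open>N choose l\<close>. For \<open>N = n\<close>, the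
  \<open>J\<close>-th partial sum of the \<open>k\<close>-th series minus the indicator of \<open>N \<ge> k\<close> equals
  \<open>(-1)^J * R k J n\<close> with \<open>R k J n = (\<Sum>t\<in>{k..<n}. (t choose (k-1)) * ((t-k) choose J)) \<ge> 0\<close>,
  and termwise comparison gives \<open>R k (J + d) n \<le> R (k + d) J n\<close> for \<open>J \<ge> k + d\<close>. Because
  of the fixed sign, the error of the \<open>k\<close>-th series is therefore dominated by the error of the
  \<open>(k + d)\<close>-th series, which tends to zero by hypothesis.\<close>

lemma sum_alternating_choose_Suc:
  "(\<Sum>j\<le>J. (-1)^j * real (Suc a choose j)) = (-1)^J * real (a choose J)"
  using gbinomial_sum_lower_neg[of "real (Suc a)" J] by (simp add: binomial_gbinomial mult.commute)

definition bonferroni_remainder :: "nat \<Rightarrow> nat \<Rightarrow> nat \<Rightarrow> nat" where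
  "bonferroni_remainder k J n = (\<Sum>t\<in>{k..<n}. (t choose (k - 1)) * ((t - k) choose J))"

lemma sum_alternating_choose_times_choose:
  assumes "1 \<le> k"
  shows "(\<Sum>j\<le>J. (-1)^j * real ((j + k - 1) choose (k - 1)) * real (n choose (j + k - 1)))
       = (if n = k - 1 then 1 else 0)
         + (if k \<le> n then (-1)^J * real (n choose (k - 1)) * real ((n - k) choose J) else 0)"
proof (cases "n < k - 1")
  case True
  then show ?thesis by (auto intro!: sum.neutral)
next
  case False
  have choose_choose: "real ((j + k - 1) choose (k - 1)) * real (n choose (j + k - 1))
      = real (n choose (k - 1)) * real ((n - (k - 1)) choose j)" for j
  proof (cases "j + k - 1 \<le> n")
    case True
    then show ?thesis using choose_mult[of "k - 1" "j + k - 1" n] assms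
      by (simp add: mult.commute flip: of_nat_mult)
  next
    case False
    then show ?thesis using \<open>\<not> n < k - 1\<close> by (simp add: binomial_eq_0)
  qed
  have "(\<Sum>j\<le>J. (-1)^j * real ((j + k - 1) choose (k - 1)) * real (n choose (j + k - 1)))
      = real (n choose (k - 1)) * (\<Sum>j\<le>J. (-1)^j * real ((n - (k - 1)) choose j))"
    unfolding sum_distrib_left
    by (intro sum.cong refl) (use choose_choose in \<open>simp add: algebra_simps\<close>)
  also have "\<dots> = (if n = k - 1 then 1 else 0)
         + (if k \<le> n then (-1)^J * real (n choose (k - 1)) * real ((n - k) choose J) else 0)"
  proof (cases "n = k - 1")
    case True
    then show ?thesis using assms by (simp add: sum.atMost_shift, linarith)
  next
    case False
    then have "n - (k - 1) = Suc (n - k)" "k \<le> n" using \<open>\<not> n < k - 1\<close> assms by linarith+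
    then show ?thesis using sum_alternating_choose_Suc[where J = J and a = "n - k"] False by simp
  qed
  finally show ?thesis .
qed

lemma bonferroni_partial_sum_choose:
  assumes "1 \<le> k"
  shows "(\<Sum>j\<le>J. (-1)^j * real ((j + k - 1) choose (k - 1)) * real (n choose (j + k)))
           - (if k \<le> n then 1 else 0)
       = (-1)^J * real (bonferroni_remainder k J n)"
proof (induction n)
  case 0
  then show ?case using assms by (auto simp: bonferroni_remainder_def intro!: sum.neutral)
next
  case (Suc n)
  have "real (Suc n choose (j + k)) = real (n choose (j + k)) + real (n choose (j + k - 1))" for j
    using assms binomial_Suc_Suc[of n "j + k - 1"] by simp
  then have "(\<Sum>j\<le>J. (-1)^j * real ((j + k - 1) choose (k - 1)) * real (Suc n choose (j + k)))
      = (\<Sum>j\<le>J. (-1)^j * real ((j + k - 1) choose (k - 1)) * real (n choose (j + k)))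
        + (\<Sum>j\<le>J. (-1)^j * real ((j + k - 1) choose (k - 1)) * real (n choose (j + k - 1)))"
    by (simp add: algebra_simps sum.distrib)
  moreover have "bonferroni_remainder k J (Suc n) = bonferroni_remainder k J n
      + (if k \<le> n then (n choose (k - 1)) * ((n - k) choose J) else 0)"
    by (simp add: bonferroni_remainder_def)
  ultimately show ?case
    using Suc.IH sum_alternating_choose_times_choose[OF assms, where J = J and n = n] assms
    by (auto simp: algebra_simps)
qed

lemma choose_times_choose_le_Suc:
  assumes "1 \<le> k" "k \<le> J" "k < t"
  shows "(t choose (k - 1)) * ((t - k) choose J) \<le> (t choose k) * ((t - Suc k) choose (J - 1))"
proof -
  define s where "s = t - k"
  have A: "(s + 1) * (t choose (k - 1)) = k * (t choose k)"
    using binomial_absorb_comp[of t "k - 1"] times_binomial_minus1_eq[of k t] assms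
    by (simp add: s_def Suc_diff_le)
  have B: "J * (s choose J) = s * ((s - 1) choose (J - 1))"
    using times_binomial_minus1_eq[of J s] assms by simp
  have "((s + 1) * J) * ((t choose (k - 1)) * (s choose J))
      = ((s + 1) * (t choose (k - 1))) * (J * (s choose J))"
    by (simp only: ac_simps)
  also have "\<dots> = (k * (t choose k)) * (s * ((s - 1) choose (J - 1)))"
    by (simp only: A B)
  also have "\<dots> = (k * s) * ((t choose k) * ((s - 1) choose (J - 1)))"
    by (simp only: ac_simps)
  also have "\<dots> \<le> ((s + 1) * J) * ((t choose k) * ((s - 1) choose (J - 1)))"
  proof (rule mult_right_mono)
    have "k * s \<le> J * s" using assms by simp
    then show "k * s \<le> (s + 1) * J" by (simp add: algebra_simps trans_le_add2)
  qed simp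
  finally have "(t choose (k - 1)) * (s choose J) \<le> (t choose k) * ((s - 1) choose (J - 1))"
    using assms by (simp only: mult_le_cancel1) simp
  then show ?thesis by (simp add: s_def)
qed

lemma bonferroni_remainder_le_Suc:
  assumes "1 \<le> k" "k \<le> J"
  shows "bonferroni_remainder k J n \<le> bonferroni_remainder (Suc k) (J - 1) n"
proof (cases "k < n")
  case False
  then show ?thesis by (simp add: bonferroni_remainder_def)
next
  case True
  have "bonferroni_remainder k J n = (\<Sum>t\<in>{Suc k..<n}. (t choose (k - 1)) * ((t - k) choose J))"
    unfolding bonferroni_remainder_def using True assms by (subst sum.atLeast_Suc_lessThan) auto
  also have "\<dots> \<le> (\<Sum>t\<in>{Suc k..<n}. (t choose k) * ((t - Suc k) choose (J - 1)))"
    using choose_times_choose_le_Suc assms by (intro sum_mono) auto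
  finally show ?thesis by (simp add: bonferroni_remainder_def)
qed

lemma bonferroni_remainder_le_shift:
  assumes "1 \<le> k" "k + d \<le> J"
  shows "bonferroni_remainder k (J + d) n \<le> bonferroni_remainder (k + d) J n"
  using assms
proof (induction d arbitrary: k)
  case 0
  then show ?case by simp
next
  case (Suc d)
  have "bonferroni_remainder k (J + Suc d) n \<le> bonferroni_remainder (Suc k) (J + d) n"
    using bonferroni_remainder_le_Suc[of k "J + Suc d" n] Suc.prems by simp
  also have "\<dots> \<le> bonferroni_remainder (Suc k + d) J n"
    using Suc.prems by (intro Suc.IH) auto
  finally show ?case by simp
qed

lemma borel_measurable_nn_integral_count_space:
  fixes f :: "'i \<Rightarrow> 'a \<Rightarrow> ennreal"
  assumes "countable I" and "\<And>i. i \<in> I \<Longrightarrow> f i \<in> borel_measurable M"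
  shows "(\<lambda>x. \<integral>\<^sup>+i. f i x \<partial>count_space I) \<in> borel_measurable M"
proof -
  interpret sigma_finite_measure "count_space I"
    using assms(1) by (rule sigma_finite_measure_count_space_countable)
  have "(\<lambda>(i, x). f i x) \<in> borel_measurable (count_space I \<Otimes>\<^sub>M M)"
    using assms by (intro measurable_pair_measure_countable1) auto
  then have "(\<lambda>(x, i). f i x) \<in> borel_measurable (M \<Otimes>\<^sub>M count_space I)"
    using measurable_pair_swap by fastforce
  then show ?thesis
    by (rule borel_measurable_nn_integral[where f = "\<lambda>x i. f i x", simplified])
qed

lemma countable_ksubsets: "countable (ksubsets l)"
  by (rule countable_subset[OF _ countable_Collect_finite]) (auto simp: ksubsets_def)

locale summable_intersections = prob_space M for M :: "'a measure" +
  fixes A :: "nat \<Rightarrow> 'a set"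
  assumes sets_A: "\<And>i. i \<ge> 1 \<Longrightarrow> A i \<in> sets M"
    and summable_measure_INT:
      "\<And>l. l \<ge> 1 \<Longrightarrow> (\<lambda>I. measure M (\<Inter>i\<in>I. A i)) summable_on ksubsets l"
begin

definition occurring :: "'a \<Rightarrow> nat set" where
  "occurring \<omega> = {i. 1 \<le> i \<and> \<omega> \<in> A i}"

text \<open>This is \<open>card (occurring \<omega>) choose l\<close> when \<open>occurring \<omega>\<close> is finite; as a
  count-space integral it is measurable and integrates to \<open>Ssum M A l\<close> by Tonelli.\<close>

definition occurring_subsets :: "nat \<Rightarrow> 'a \<Rightarrow> ennreal" where
  "occurring_subsets l \<omega> = (\<integral>\<^sup>+I. indicator (\<Inter>i\<in>I. A i) \<omega> \<partial>count_space (ksubsets l))"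

lemma sets_INT_ksubsets: "l \<ge> 1 \<Longrightarrow> I \<in> ksubsets l \<Longrightarrow> (\<Inter>i\<in>I. A i) \<in> sets M"
  unfolding ksubsets_def by (intro sets.finite_INT sets_A) auto

lemma mem_INT_ksubsets_iff: "I \<in> ksubsets l \<Longrightarrow> \<omega> \<in> (\<Inter>i\<in>I. A i) \<longleftrightarrow> I \<subseteq> occurring \<omega>"
  by (auto simp: ksubsets_def occurring_def)

lemma borel_measurable_occurring_subsets: "l \<ge> 1 \<Longrightarrow> occurring_subsets l \<in> borel_measurable M"
  unfolding occurring_subsets_def[abs_def]
  by (intro borel_measurable_nn_integral_count_space countable_ksubsets borel_measurable_indicator
      sets_INT_ksubsets)

lemma occurring_subsets_eq_emeasure:
  "occurring_subsets l \<omega> = emeasure (count_space (ksubsets l)) {I \<in> ksubsets l. I \<subseteq> occurring \<omega>}"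
proof -
  have "occurring_subsets l \<omega>
      = (\<integral>\<^sup>+I. indicator {I \<in> ksubsets l. I \<subseteq> occurring \<omega>} I \<partial>count_space (ksubsets l))"
    unfolding occurring_subsets_def
    by (intro nn_integral_cong) (auto simp: indicator_def mem_INT_ksubsets_iff simp del: Inter_iff INT_iff)
  then show ?thesis by simp
qed

lemma occurring_subsets_eq_choose:
  assumes "finite (occurring \<omega>)"
  shows "occurring_subsets l \<omega> = of_nat (card (occurring \<omega>) choose l)"
proof -
  have eq: "{I \<in> ksubsets l. I \<subseteq> occurring \<omega>} = {I. I \<subseteq> occurring \<omega> \<and> card I = l}"
    using assms by (auto simp: ksubsets_def occurring_def intro: finite_subset)
  have "finite {I. I \<subseteq> occurring \<omega> \<and> card I = l}"
    using assms by (auto intro: finite_subset[of _ "Pow (occurring \<omega>)"])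
  then show ?thesis
    unfolding occurring_subsets_eq_emeasure eq using n_subsets[OF assms, of l]
    by (subst emeasure_count_space) (auto simp: eq[symmetric])
qed

lemma occurring_subsets_1_infinite:
  assumes "infinite (occurring \<omega>)"
  shows "occurring_subsets 1 \<omega> = \<infinity>"
proof -
  have "infinite ((\<lambda>i. {i}) ` occurring \<omega>)"
    using assms by (auto dest!: finite_imageD simp: inj_on_def)
  moreover have "(\<lambda>i. {i}) ` occurring \<omega> \<subseteq> {I \<in> ksubsets 1. I \<subseteq> occurring \<omega>}"
    by (auto simp: ksubsets_def occurring_def)
  ultimately have "infinite {I \<in> ksubsets 1. I \<subseteq> occurring \<omega>}"
    using finite_subset by blast
  then show ?thesis
    unfolding occurring_subsets_eq_emeasure by (subst emeasure_count_space) auto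
qed

lemma nn_integral_occurring_subsets:
  assumes "l \<ge> 1"
  shows "(\<integral>\<^sup>+\<omega>. occurring_subsets l \<omega> \<partial>M) = ennreal (Ssum M A l)"
proof -
  have "(\<lambda>I. norm (measure M (\<Inter>i\<in>I. A i))) summable_on ksubsets l"
    using summable_measure_INT[OF assms] by simp
  then have abs_summable:
    "Infinite_Set_Sum.abs_summable_on (\<lambda>I. measure M (\<Inter>i\<in>I. A i)) (ksubsets l)"
    using abs_summable_equivalent by blast
  have "(\<integral>\<^sup>+\<omega>. occurring_subsets l \<omega> \<partial>M)
      = (\<integral>\<^sup>+I. \<integral>\<^sup>+\<omega>. indicator (\<Inter>i\<in>I. A i) \<omega> \<partial>M \<partial>count_space (ksubsets l))"
    unfolding occurring_subsets_def
    by (rule nn_integral_count_space_nn_integral[OF countable_ksubsets])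
      (auto intro!: borel_measurable_indicator sets_INT_ksubsets[OF assms])
  also have "\<dots> = (\<integral>\<^sup>+I. ennreal (measure M (\<Inter>i\<in>I. A i)) \<partial>count_space (ksubsets l))"
    by (intro nn_integral_cong) (simp add: sets_INT_ksubsets[OF assms] emeasure_eq_measure)
  also have "\<dots> = ennreal (infsetsum (\<lambda>I. measure M (\<Inter>i\<in>I. A i)) (ksubsets l))"
    by (intro nn_integral_conv_infsetsum abs_summable) auto
  finally show ?thesis
    unfolding Ssum_def by (simp add: infsetsum_infsum[OF abs_summable])
qed

lemma AE_finite_occurring: "AE \<omega> in M. finite (occurring \<omega>)"
proof -
  have "AE \<omega> in M. occurring_subsets 1 \<omega> \<noteq> \<infinity>"
    by (intro nn_integral_PInf_AE borel_measurable_occurring_subsets)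
      (auto simp: nn_integral_occurring_subsets)
  then show ?thesis
    by eventually_elim (use occurring_subsets_1_infinite in blast)
qed

definition occurring_choose :: "nat \<Rightarrow> 'a \<Rightarrow> real" where
  "occurring_choose l \<omega> = enn2real (occurring_subsets l \<omega>)"

lemma occurring_choose_eq:
  "finite (occurring \<omega>) \<Longrightarrow> occurring_choose l \<omega> = real (card (occurring \<omega>) choose l)"
  by (simp add: occurring_choose_def occurring_subsets_eq_choose)

lemma
  assumes "l \<ge> 1"
  shows integrable_occurring_choose: "integrable M (occurring_choose l)"
    and integral_occurring_choose: "integral\<^sup>L M (occurring_choose l) = Ssum M A l"
proof -
  have meas: "occurring_choose l \<in> borel_measurable M"
    unfolding occurring_choose_def[abs_def] using borel_measurable_occurring_subsets[OF assms]
    by measurable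
  have "AE \<omega> in M. occurring_subsets l \<omega> \<noteq> \<infinity>"
    by (intro nn_integral_PInf_AE borel_measurable_occurring_subsets assms)
      (auto simp: nn_integral_occurring_subsets[OF assms])
  then have "(\<integral>\<^sup>+\<omega>. ennreal (occurring_choose l \<omega>) \<partial>M) = (\<integral>\<^sup>+\<omega>. occurring_subsets l \<omega> \<partial>M)"
    by (intro nn_integral_cong_AE) (auto simp: occurring_choose_def less_top)
  also have "\<dots> = ennreal (Ssum M A l)"
    by (rule nn_integral_occurring_subsets[OF assms])
  finally have nn: "(\<integral>\<^sup>+\<omega>. ennreal (occurring_choose l \<omega>) \<partial>M) = ennreal (Ssum M A l)" .
  have "Ssum M A l \<ge> 0"
    unfolding Ssum_def by (intro infsum_nonneg) auto
  then show "integrable M (occurring_choose l)"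
    and "integral\<^sup>L M (occurring_choose l) = Ssum M A l"
    using meas nn
    by (auto intro!: integrableI_nonneg simp: integral_eq_nn_integral occurring_choose_def)
qed

lemma sets_atleast_event: "k \<ge> 1 \<Longrightarrow> atleast_event A k \<in> sets M"
  unfolding atleast_event_def
  by (intro sets.countable_UN'' countable_ksubsets sets_INT_ksubsets)

lemma mem_atleast_event_iff:
  assumes "finite (occurring \<omega>)"
  shows "\<omega> \<in> atleast_event A k \<longleftrightarrow> k \<le> card (occurring \<omega>)"
proof -
  have "\<omega> \<in> atleast_event A k \<longleftrightarrow> (\<exists>I\<in>ksubsets k. I \<subseteq> occurring \<omega>)"
    unfolding atleast_event_def using mem_INT_ksubsets_iff by blast
  also have "\<dots> \<longleftrightarrow> k \<le> card (occurring \<omega>)"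
  proof
    assume "\<exists>I\<in>ksubsets k. I \<subseteq> occurring \<omega>"
    then show "k \<le> card (occurring \<omega>)"
      using card_mono[OF assms] by (auto simp: ksubsets_def)
  next
    assume "k \<le> card (occurring \<omega>)"
    then obtain I where "I \<subseteq> occurring \<omega>" "card I = k" "finite I"
      by (rule obtain_subset_with_card_n)
    then show "\<exists>I\<in>ksubsets k. I \<subseteq> occurring \<omega>"
      by (intro bexI[of _ I]) (auto simp: ksubsets_def occurring_def)
  qed
  finally show ?thesis .
qed

definition bonferroni_error :: "nat \<Rightarrow> nat \<Rightarrow> 'a \<Rightarrow> real" where
  "bonferroni_error k J \<omega> =
     (\<Sum>j<J. (-1)^j * real ((j + k - 1) choose (k - 1)) * occurring_choose (j + k) \<omega>)
     - indicator (atleast_event A k) \<omega>"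

lemma
  assumes "k \<ge> 1"
  shows integrable_bonferroni_error: "integrable M (bonferroni_error k J)"
    and integral_bonferroni_error: "integral\<^sup>L M (bonferroni_error k J)
      = (\<Sum>j<J. (-1)^j * real ((j + k - 1) choose (k - 1)) * Ssum M A (j + k))
        - measure M (atleast_event A k)"
proof -
  have "integrable M (\<lambda>\<omega>.
      \<Sum>j<J. (-1)^j * real ((j + k - 1) choose (k - 1)) * occurring_choose (j + k) \<omega>)"
    using assms
    by (intro Bochner_Integration.integrable_sum integrable_mult_right integrable_occurring_choose)
      auto
  moreover have "integrable M (indicator (atleast_event A k) :: 'a \<Rightarrow> real)"
    using assms by (intro integrable_real_indicator sets_atleast_event) (auto simp: less_top[symmetric])
  ultimately show "integrable M (bonferroni_error k J)"
    and "integral\<^sup>L M (bonferroni_error k J)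
      = (\<Sum>j<J. (-1)^j * real ((j + k - 1) choose (k - 1)) * Ssum M A (j + k))
        - measure M (atleast_event A k)"
    unfolding bonferroni_error_def[abs_def] using assms
    by (auto simp: integral_occurring_choose integrable_occurring_choose
        Int_absorb2 sets.sets_into_space sets_atleast_event)
qed

lemma AE_bonferroni_error_eq:
  assumes "k \<ge> 1"
  shows "AE \<omega> in M. bonferroni_error k (Suc J) \<omega>
           = (-1)^J * real (bonferroni_remainder k J (card (occurring \<omega>)))"
  using AE_finite_occurring
proof eventually_elim
  case (elim \<omega>)
  then show ?case
    using bonferroni_partial_sum_choose[OF assms, where J = J and n = "card (occurring \<omega>)"]
    by (simp add: bonferroni_error_def occurring_choose_eq mem_atleast_event_iff
        lessThan_Suc_atMost indicator_def split: if_splits)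
qed

lemma abs_integral_bonferroni_error_le:
  assumes "k \<ge> 1" "k + d \<le> J"
  shows "\<bar>integral\<^sup>L M (bonferroni_error k (Suc (J + d)))\<bar>
       \<le> \<bar>integral\<^sup>L M (bonferroni_error (k + d) (Suc J))\<bar>"
proof -
  have "k + d \<ge> 1" using assms by simp
  have "\<bar>integral\<^sup>L M (bonferroni_error k (Suc (J + d)))\<bar>
      \<le> (\<integral>\<omega>. \<bar>bonferroni_error k (Suc (J + d)) \<omega>\<bar> \<partial>M)"
    using integral_norm_bound[of M "bonferroni_error k (Suc (J + d))"] by simp
  also have "\<dots> \<le> (\<integral>\<omega>. (-1)^J * bonferroni_error (k + d) (Suc J) \<omega> \<partial>M)"
  proof (rule integral_mono_AE)
    show "AE \<omega> in M.
      \<bar>bonferroni_error k (Suc (J + d)) \<omega>\<bar> \<le> (-1)^J * bonferroni_error (k + d) (Suc J) \<omega>"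
      using AE_bonferroni_error_eq[OF assms(1), of "J + d"]
        AE_bonferroni_error_eq[OF \<open>k + d \<ge> 1\<close>, of J]
    proof eventually_elim
      case (elim \<omega>)
      then show ?case
        using bonferroni_remainder_le_shift[OF assms, of "card (occurring \<omega>)"]
        by (simp add: abs_mult flip: power_add mult.assoc)
    qed
  qed (use assms in \<open>auto intro!: integrable_mult_right integrable_bonferroni_error\<close>)
  also have "\<dots> \<le> \<bar>integral\<^sup>L M (bonferroni_error (k + d) (Suc J))\<bar>"
    by (cases "even J") auto
  finally show ?thesis .
qed

lemma bonferroni_sums_iff:
  assumes "k \<ge> 1"
  shows "(\<lambda>j. (-1)^j * real ((j + k - 1) choose (k - 1)) * Ssum M A (j + k))
           sums measure M (atleast_event A k)
     \<longleftrightarrow> (\<lambda>J. integral\<^sup>L M (bonferroni_error k J)) \<longlonglongrightarrow> 0"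
  unfolding sums_def integral_bonferroni_error[OF assms]
  by (simp add: LIM_zero_iff)

lemma bonferroni_sums_mono:
  assumes "1 \<le> k" "k \<le> m"
    and "(\<lambda>j. (-1)^j * real ((j + m - 1) choose (m - 1)) * Ssum M A (j + m))
           sums measure M (atleast_event A m)"
  shows "(\<lambda>j. (-1)^j * real ((j + k - 1) choose (k - 1)) * Ssum M A (j + k))
           sums measure M (atleast_event A k)"
proof -
  define d where "d = m - k"
  have m: "m = k + d" "m \<ge> 1" using assms by (auto simp: d_def)
  have lim_m: "(\<lambda>J. integral\<^sup>L M (bonferroni_error m (Suc J))) \<longlonglongrightarrow> 0"
    using assms(3) bonferroni_sums_iff[OF m(2)] LIMSEQ_Suc by blast
  have bound: "\<forall>\<^sub>F J in sequentially. norm (integral\<^sup>L M (bonferroni_error k (Suc (J + d))))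
      \<le> \<bar>integral\<^sup>L M (bonferroni_error m (Suc J))\<bar>"
    using abs_integral_bonferroni_error_le[OF assms(1)] m by (auto simp: eventually_sequentially)
  have "(\<lambda>J. integral\<^sup>L M (bonferroni_error k (Suc (J + d)))) \<longlonglongrightarrow> 0"
    by (rule Lim_null_comparison[OF bound tendsto_rabs_zero[OF lim_m]])
  then have "(\<lambda>J. integral\<^sup>L M (bonferroni_error k (J + Suc d))) \<longlonglongrightarrow> 0"
    by simp
  then have "(\<lambda>J. integral\<^sup>L M (bonferroni_error k J)) \<longlonglongrightarrow> 0"
    by (rule LIMSEQ_offset)
  then show ?thesis
    using bonferroni_sums_iff[OF assms(1)] by simp
qed

end

theorem corollary2p2:
  fixes M :: "'a measure" and A :: "nat \<Rightarrow> 'a set" and m :: nat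
  assumes "prob_space M"
    and "\<And>i. i \<ge> 1 \<Longrightarrow> A i \<in> sets M"
    and "\<And>l. l \<ge> 1 \<Longrightarrow> (\<lambda>I. measure M (\<Inter>i\<in>I. A i)) summable_on ksubsets l"
    and "m > 1"
    and "(\<lambda>j. (-1) ^ j * real ((j + m - 1) choose (m - 1)) * Ssum M A (j + m))
           sums measure M (atleast_event A m)"
    and "1 \<le> k" and "k \<le> m - 1"
  shows "(\<lambda>j. (-1) ^ j * real ((j + k - 1) choose (k - 1)) * Ssum M A (j + k))
           sums measure M (atleast_event A k)"
proof -
  interpret summable_intersections M A
    using assms(1-3) by (intro summable_intersections.intro summable_intersections_axioms.intro)
  show ?thesis
    using assms(4-7) by (intro bonferroni_sums_mono[of k m]) auto
qed

end
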